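(* Let $E_1^S,\dots,E_{d_S}^S\ge 0$ be real numbers, $E\in\mathbb{R}$, and let $s:\mathbb{R}\to\mathbb{R}$ be twice differentiable. Set $\beta=s'(E)$ and define probability vectors $$p_k=\frac{e^{s(E-E_k^S)}}{\sum_{l=1}^{d_S}e^{s(E-E_l^S)}},\qquad q_k=\frac{e^{-\beta E_k^S}}{\sum_{l=1}^{d_S}e^{-\beta E_l^S}} .$$ Let $$\gamma_{\max}=\max_k\sup_{\xi\in[E-E_k^S,E]}\tfrac12 s''(\xi)(E_k^S)^2,\qquad \gamma_{\min}=\min_k\inf_{\xi\in[E-E_k^S,E]}\tfrac12 s''(\xi)(E_k^S)^2,$$ assumed finite. Then for every $k$, $|p_k-q_k|\le q_k\left(e^{\gamma_{\max}-\gamma_{\min}}-1\right)$, and consequently $$\tfrac12\sum_{k=1}^{d_S}|p_k-q_k|\le \tfrac12\left(e^{\gamma_{\max}-\gamma_{\min}}-1\right).$$ In particular, if there are $\eta>0$ and an integer $m\ge1$ such that $-\frac{4}{\eta^2m}\le s''(\xi)\le 0$ for all $\xi\in[E-\max_kE_k^S,E]$, and $\max_k E_k^S\le h$, then $\tfrac12\sum_k|p_k-q_k|\le \tfrac12\left(e^{2h^2/(\eta^2 m)}-1\right)$.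
   Context: Here $e^{s}$ plays the role of a smooth approximation of the number of bath energy levels in an energy window, the $E_k^S$ are the eigenvalues of a system Hamiltonian $H_S$ (so $h$ can be taken to be $\|H_S\|_\infty$ when $H_S\ge0$), $(p_k)$ are the eigenvalues of the reduced microcanonical state of the uncoupled system-plus-bath, and $(q_k)$ are the eigenvalues of the Gibbs state $e^{-\beta H_S}/\operatorname{Tr}e^{-\beta H_S}$. *)

theory Defs
  imports "HOL-Analysis.Analysis"
begin

text \<open>System energies are indexed by k < d (d = d_S). p is the reduced microcanonical
spectrum, q the Gibbs spectrum at inverse temperature beta.\<close>

definition pvec :: "(real \<Rightarrow> real) \<Rightarrow> real \<Rightarrow> (nat \<Rightarrow> real) \<Rightarrow> nat \<Rightarrow> nat \<Rightarrow> real" where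
  "pvec s E ES d k = exp (s (E - ES k)) / (\<Sum>l<d. exp (s (E - ES l)))"

definition qvec :: "real \<Rightarrow> (nat \<Rightarrow> real) \<Rightarrow> nat \<Rightarrow> nat \<Rightarrow> real" where
  "qvec \<beta> ES d k = exp (- \<beta> * ES k) / (\<Sum>l<d. exp (- \<beta> * ES l))"

definition gamma_max :: "(real \<Rightarrow> real) \<Rightarrow> real \<Rightarrow> (nat \<Rightarrow> real) \<Rightarrow> nat \<Rightarrow> real" where
  "gamma_max s2 E ES d =
     Max ((\<lambda>k. SUP \<xi>\<in>{E - ES k..E}. s2 \<xi> * (ES k)\<^sup>2 / 2) ` {..<d})"

definition gamma_min :: "(real \<Rightarrow> real) \<Rightarrow> real \<Rightarrow> (nat \<Rightarrow> real) \<Rightarrow> nat \<Rightarrow> real" where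
  "gamma_min s2 E ES d =
     Min ((\<lambda>k. INF \<xi>\<in>{E - ES k..E}. s2 \<xi> * (ES k)\<^sup>2 / 2) ` {..<d})"

end

theory Submission imports Defs begin

(* Writing beta = s'(E), the second-order Taylor formula with Lagrange remainder gives
     s(E - E_k) = s(E) - beta E_k + g_k,   g_k = s''(xi_k) E_k^2 / 2,   xi_k in [E - E_k, E],
   so p is the distribution q "tilted" by the factors exp g_k. *)

text \<open>If a ratio lies between \<open>exp (-D)\<close> and \<open>exp D\<close>, it differs from 1 by at most \<open>exp D - 1\<close>;
  the lower side uses \<open>1 - exp (-D) \<le> exp D - 1\<close>, i.e. \<open>exp D + exp (-D) \<ge> 2\<close>.\<close>
lemma abs_minus_one_le_exp_minus_one:
  fixes r D :: real
  assumes "exp (- D) \<le> r" and "r \<le> exp D"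
  shows "\<bar>r - 1\<bar> \<le> exp D - 1"
proof -
  have "2 * exp D \<le> exp D * exp D + 1"
    using zero_le_power2[of "exp D - 1"] by (simp add: power2_eq_square algebra_simps)
  then have "exp D + exp (- D) \<ge> 2"
    by (simp add: exp_minus field_simps)
  with assms show ?thesis by linarith
qed

lemma tilted_distribution_pointwise:
  fixes w g :: "'i \<Rightarrow> real" and I :: "'i set"
  assumes fin: "finite I" and k: "k \<in> I"
    and w_pos: "\<And>i. i \<in> I \<Longrightarrow> w i > 0"
    and g_lo: "\<And>i. i \<in> I \<Longrightarrow> a \<le> g i" and g_hi: "\<And>i. i \<in> I \<Longrightarrow> g i \<le> b"
  shows "\<bar>w k * exp (g k) / (\<Sum>i\<in>I. w i * exp (g i)) - w k / (\<Sum>i\<in>I. w i)\<bar>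
           \<le> w k / (\<Sum>i\<in>I. w i) * (exp (b - a) - 1)"
proof -
  define W where "W = (\<Sum>i\<in>I. w i)"
  define Z where "Z = (\<Sum>i\<in>I. w i * exp (g i))"
  have W_pos: "W > 0"
    unfolding W_def using fin k w_pos by (intro sum_pos) auto
  have Z_lo: "W * exp a \<le> Z"
    unfolding W_def Z_def sum_distrib_right using w_pos g_lo by (intro sum_mono) auto
  have Z_hi: "Z \<le> W * exp b"
    unfolding W_def Z_def sum_distrib_right using w_pos g_hi by (intro sum_mono) auto
  have Z_pos: "Z > 0"
    using Z_lo W_pos by (smt (verit) exp_gt_zero mult_pos_pos)
  define r where "r = W * exp (g k) / Z"
  have "r \<le> W * exp b / (W * exp a)"
    unfolding r_def using W_pos Z_pos Z_lo g_hi[OF k] by (intro frac_le) auto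
  also have "\<dots> = exp (b - a)"
    using W_pos by (simp add: exp_diff)
  finally have r_hi: "r \<le> exp (b - a)" .
  have "exp (- (b - a)) = W * exp a / (W * exp b)"
    using W_pos by (simp add: exp_diff exp_minus field_simps)
  also have "\<dots> \<le> r"
    unfolding r_def using W_pos Z_pos Z_hi g_lo[OF k] by (intro frac_le) auto
  finally have r_lo: "exp (- (b - a)) \<le> r" .
  have "w k * exp (g k) / Z - w k / W = w k / W * (r - 1)"
    using W_pos Z_pos unfolding r_def by (simp add: field_simps)
  then have "\<bar>w k * exp (g k) / Z - w k / W\<bar> = w k / W * \<bar>r - 1\<bar>"
    using w_pos[OF k] W_pos by (simp add: abs_mult)
  also have "\<dots> \<le> w k / W * (exp (b - a) - 1)"
    using abs_minus_one_le_exp_minus_one[OF r_lo r_hi] w_pos[OF k] W_pos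
    by (intro mult_left_mono) auto
  finally show ?thesis unfolding W_def Z_def .
qed

lemma sum_le_of_pointwise_relative_bound:
  fixes w :: "'i \<Rightarrow> real" and \<delta> :: "'i \<Rightarrow> real"
  assumes fin: "finite I" and ne: "I \<noteq> {}"
    and w_pos: "\<And>i. i \<in> I \<Longrightarrow> w i > 0"
    and bound: "\<And>i. i \<in> I \<Longrightarrow> \<delta> i \<le> w i / (\<Sum>j\<in>I. w j) * c"
  shows "(\<Sum>i\<in>I. \<delta> i) \<le> c"
proof -
  have W_pos: "(\<Sum>j\<in>I. w j) > 0"
    using fin ne w_pos by (intro sum_pos) auto
  have "(\<Sum>i\<in>I. \<delta> i) \<le> (\<Sum>i\<in>I. w i / (\<Sum>j\<in>I. w j) * c)"
    using bound by (intro sum_mono) auto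
  also have "\<dots> = (\<Sum>i\<in>I. w i) / (\<Sum>j\<in>I. w j) * c"
    unfolding sum_distrib_right[symmetric] sum_divide_distrib[symmetric] ..
  also have "\<dots> = c"
    using W_pos by simp
  finally show ?thesis .
qed

lemma taylor_second_order_left:
  fixes s s1 s2 :: "real \<Rightarrow> real"
  assumes s_deriv: "\<And>x. (s has_real_derivative s1 x) (at x)"
    and s1_deriv: "\<And>x. (s1 has_real_derivative s2 x) (at x)"
    and x: "x \<ge> 0"
  shows "\<exists>\<xi>\<in>{E - x..E}. s (E - x) = s E - s1 E * x + s2 \<xi> * x\<^sup>2 / 2"
proof (cases "x = 0")
  case True
  then show ?thesis by auto
next
  case False
  define diff where "diff = (\<lambda>m::nat. if m = 0 then s else if m = 1 then s1 else s2)"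
  have "\<exists>t. E - x < t \<and> t < E \<and>
          s (E - x) = (\<Sum>m<2. diff m E / fact m * ((E - x) - E) ^ m)
                      + diff 2 t / fact 2 * ((E - x) - E) ^ 2"
    using False x s_deriv s1_deriv
    by (intro Taylor_down[where b = E]) (auto simp: diff_def less_2_cases_iff)
  then obtain t where "E - x < t" "t < E"
    and "s (E - x) = (\<Sum>m<2. diff m E / fact m * ((E - x) - E) ^ m)
                     + diff 2 t / fact 2 * ((E - x) - E) ^ 2"
    by blast
  then show ?thesis
    by (intro bexI[of _ t]) (auto simp: diff_def numeral_2_eq_2 power2_eq_square)
qed

text \<open>If \<open>s (E - E\<^sub>k) = s E - \<beta> E\<^sub>k + g\<^sub>k\<close>, the microcanonical spectrum is the Gibbs weight
  \<open>exp (-\<beta> E\<^sub>k)\<close> tilted by \<open>exp g\<^sub>k\<close>; the constant \<open>exp (s E)\<close> cancels on normalising.\<close>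
lemma pvec_as_tilted_gibbs:
  fixes g :: "nat \<Rightarrow> real"
  assumes expansion: "\<And>k. k < d \<Longrightarrow> s (E - ES k) = s E - \<beta> * ES k + g k"
    and k: "k < d"
  shows "pvec s E ES d k = exp (- \<beta> * ES k) * exp (g k)
                           / (\<Sum>l<d. exp (- \<beta> * ES l) * exp (g l))"
proof -
  have factor: "exp (s (E - ES l)) = exp (s E) * (exp (- \<beta> * ES l) * exp (g l))"
    if "l < d" for l
    using expansion[OF that] by (simp add: exp_add[symmetric])
  have "(\<Sum>l<d. exp (s (E - ES l))) = exp (s E) * (\<Sum>l<d. exp (- \<beta> * ES l) * exp (g l))"
    unfolding sum_distrib_left by (rule sum.cong) (auto simp: factor)
  then show ?thesis
    unfolding pvec_def factor[OF k] by simp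
qed

lemma gamma_bracket:
  fixes s2 :: "real \<Rightarrow> real"
  assumes bdd: "\<forall>k<d. bdd_above ((\<lambda>\<xi>. s2 \<xi> * (ES k)\<^sup>2 / 2) ` {E - ES k..E}) \<and>
                      bdd_below ((\<lambda>\<xi>. s2 \<xi> * (ES k)\<^sup>2 / 2) ` {E - ES k..E})"
    and k: "k < d" and \<xi>: "\<xi> \<in> {E - ES k..E}"
  shows "gamma_min s2 E ES d \<le> s2 \<xi> * (ES k)\<^sup>2 / 2"
    and "s2 \<xi> * (ES k)\<^sup>2 / 2 \<le> gamma_max s2 E ES d"
proof -
  have "gamma_min s2 E ES d \<le> (INF x\<in>{E - ES k..E}. s2 x * (ES k)\<^sup>2 / 2)"
    unfolding gamma_min_def using k by (intro Min_le) auto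
  also have "\<dots> \<le> s2 \<xi> * (ES k)\<^sup>2 / 2"
    using bdd k \<xi> by (intro cINF_lower) auto
  finally show "gamma_min s2 E ES d \<le> s2 \<xi> * (ES k)\<^sup>2 / 2" .
  have "s2 \<xi> * (ES k)\<^sup>2 / 2 \<le> (SUP x\<in>{E - ES k..E}. s2 x * (ES k)\<^sup>2 / 2)"
    using bdd k \<xi> by (intro cSUP_upper) auto
  also have "\<dots> \<le> gamma_max s2 E ES d"
    unfolding gamma_max_def using k by (intro Max_ge) auto
  finally show "s2 \<xi> * (ES k)\<^sup>2 / 2 \<le> gamma_max s2 E ES d" .
qed

lemma microcanonical_gibbs_closeness:
  fixes s s1 s2 :: "real \<Rightarrow> real"
  assumes d_pos: "d \<ge> 1"
    and ES_nonneg: "\<forall>k<d. ES k \<ge> 0"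
    and s_deriv: "\<And>x. (s has_real_derivative s1 x) (at x)"
    and s1_deriv: "\<And>x. (s1 has_real_derivative s2 x) (at x)"
    and bdd: "\<forall>k<d. bdd_above ((\<lambda>\<xi>. s2 \<xi> * (ES k)\<^sup>2 / 2) ` {E - ES k..E}) \<and>
                    bdd_below ((\<lambda>\<xi>. s2 \<xi> * (ES k)\<^sup>2 / 2) ` {E - ES k..E})"
  shows "(\<forall>k<d. \<bar>pvec s E ES d k - qvec (s1 E) ES d k\<bar>
                 \<le> qvec (s1 E) ES d k * (exp (gamma_max s2 E ES d - gamma_min s2 E ES d) - 1)) \<and>
         (\<Sum>k<d. \<bar>pvec s E ES d k - qvec (s1 E) ES d k\<bar>) / 2
           \<le> (exp (gamma_max s2 E ES d - gamma_min s2 E ES d) - 1) / 2"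
proof -
  have "\<forall>k. \<exists>\<xi>. k < d \<longrightarrow>
          \<xi> \<in> {E - ES k..E} \<and> s (E - ES k) = s E - s1 E * ES k + s2 \<xi> * (ES k)\<^sup>2 / 2"
    using taylor_second_order_left[OF s_deriv s1_deriv] ES_nonneg by metis
  then obtain \<xi> where \<xi>: "\<And>k. k < d \<Longrightarrow> \<xi> k \<in> {E - ES k..E}"
    and expansion: "\<And>k. k < d \<Longrightarrow> s (E - ES k) = s E - s1 E * ES k + s2 (\<xi> k) * (ES k)\<^sup>2 / 2"
    by metis
  define w where "w k = exp (- s1 E * ES k)" for k
  define g where "g k = s2 (\<xi> k) * (ES k)\<^sup>2 / 2" for k
  define c where "c = exp (gamma_max s2 E ES d - gamma_min s2 E ES d) - 1"
  have q: "qvec (s1 E) ES d k = w k / (\<Sum>l<d. w l)" for k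
    unfolding qvec_def w_def ..
  have pointwise: "\<bar>pvec s E ES d k - qvec (s1 E) ES d k\<bar> \<le> w k / (\<Sum>l<d. w l) * c"
    if k: "k < d" for k
  proof -
    have p: "pvec s E ES d k = w k * exp (g k) / (\<Sum>l<d. w l * exp (g l))"
      unfolding w_def g_def by (rule pvec_as_tilted_gibbs) (use expansion k in auto)
    have "\<bar>w k * exp (g k) / (\<Sum>l<d. w l * exp (g l)) - w k / (\<Sum>l<d. w l)\<bar>
            \<le> w k / (\<Sum>l<d. w l) * c"
      unfolding c_def using k gamma_bracket[OF bdd _ \<xi>]
      by (intro tilted_distribution_pointwise) (auto simp: w_def g_def)
    then show ?thesis
      unfolding p q .
  qed
  have "(\<Sum>k<d. \<bar>pvec s E ES d k - qvec (s1 E) ES d k\<bar>) \<le> c"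
    using d_pos pointwise
    by (intro sum_le_of_pointwise_relative_bound[where w = w]) (auto simp: w_def lessThan_empty_iff)
  with pointwise show ?thesis
    unfolding q c_def by auto
qed

lemma remainder_bounds_under_curvature:
  fixes ES :: "nat \<Rightarrow> real" and s2 :: "real \<Rightarrow> real" and \<eta> :: real and m :: nat
  assumes curv: "\<forall>\<xi>\<in>{E - Max (ES ` {..<d})..E}. - 4 / (\<eta>\<^sup>2 * real m) \<le> s2 \<xi> \<and> s2 \<xi> \<le> 0"
    and h: "Max (ES ` {..<d}) \<le> h"
    and k: "k < d" and ES_k_nonneg: "ES k \<ge> 0" and x: "x \<in> {E - ES k..E}"
  shows "- (2 * h\<^sup>2 / (\<eta>\<^sup>2 * real m)) \<le> s2 x * (ES k)\<^sup>2 / 2"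
    and "s2 x * (ES k)\<^sup>2 / 2 \<le> 0"
proof -
  have ES_le_Max: "ES k \<le> Max (ES ` {..<d})"
    using k by (auto intro!: Max_ge)
  then have s2x: "- 4 / (\<eta>\<^sup>2 * real m) \<le> s2 x" "s2 x \<le> 0"
    using curv x by auto
  have "(ES k)\<^sup>2 \<le> h\<^sup>2"
    using ES_k_nonneg ES_le_Max h by (intro power_mono) auto
  then have "- 4 / (\<eta>\<^sup>2 * real m) * h\<^sup>2 \<le> - 4 / (\<eta>\<^sup>2 * real m) * (ES k)\<^sup>2"
    by (intro mult_left_mono_neg) (auto simp: divide_nonpos_nonneg)
  also have "\<dots> \<le> s2 x * (ES k)\<^sup>2"
    using s2x by (intro mult_right_mono) auto
  finally show "- (2 * h\<^sup>2 / (\<eta>\<^sup>2 * real m)) \<le> s2 x * (ES k)\<^sup>2 / 2"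
    by simp
  show "s2 x * (ES k)\<^sup>2 / 2 \<le> 0"
    using s2x by (simp add: mult_nonpos_nonneg)
qed

text \<open>Second claim of the theorem: a uniform total-variation bound from the curvature
  condition, via \<open>gamma_max \<le> 0\<close> and \<open>gamma_min \<ge> -2h\<^sup>2/(\<eta>\<^sup>2 m)\<close>.\<close>
lemma microcanonical_gibbs_closeness_uniform:
  fixes s s1 s2 :: "real \<Rightarrow> real" and \<eta> :: real and m :: nat
  assumes d_pos: "d \<ge> 1"
    and ES_nonneg: "\<forall>k<d. ES k \<ge> 0"
    and s_deriv: "\<And>x. (s has_real_derivative s1 x) (at x)"
    and s1_deriv: "\<And>x. (s1 has_real_derivative s2 x) (at x)"
    and curv: "\<forall>\<xi>\<in>{E - Max (ES ` {..<d})..E}. - 4 / (\<eta>\<^sup>2 * real m) \<le> s2 \<xi> \<and> s2 \<xi> \<le> 0"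
    and h: "Max (ES ` {..<d}) \<le> h"
  shows "(\<Sum>k<d. \<bar>pvec s E ES d k - qvec (s1 E) ES d k\<bar>) / 2
           \<le> (exp (2 * h\<^sup>2 / (\<eta>\<^sup>2 * real m)) - 1) / 2"
proof -
  have bounds: "- (2 * h\<^sup>2 / (\<eta>\<^sup>2 * real m)) \<le> s2 x * (ES k)\<^sup>2 / 2"
      "s2 x * (ES k)\<^sup>2 / 2 \<le> 0" if "k < d" "x \<in> {E - ES k..E}" for k x
    using remainder_bounds_under_curvature[OF curv h that(1) ES_nonneg[rule_format, OF that(1)] that(2)]
    by auto
  have d_nonempty: "{..<d} \<noteq> {}"
    using d_pos by (auto simp: lessThan_empty_iff)
  have interval_nonempty: "{E - ES k..E} \<noteq> {}" if "k < d" for k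
    using ES_nonneg that by auto
  have bdd: "\<forall>k<d. bdd_above ((\<lambda>\<xi>. s2 \<xi> * (ES k)\<^sup>2 / 2) ` {E - ES k..E}) \<and>
                   bdd_below ((\<lambda>\<xi>. s2 \<xi> * (ES k)\<^sup>2 / 2) ` {E - ES k..E})"
    using bounds by (meson bdd_aboveI2 bdd_belowI2)
  have "(SUP x\<in>{E - ES k..E}. s2 x * (ES k)\<^sup>2 / 2) \<le> 0" if "k < d" for k
    using interval_nonempty[OF that] bounds(2)[OF that] by (intro cSUP_least) auto
  then have "gamma_max s2 E ES d \<le> 0"
    unfolding gamma_max_def using d_nonempty by (simp add: Max_le_iff)
  moreover have "- (2 * h\<^sup>2 / (\<eta>\<^sup>2 * real m))
                   \<le> (INF x\<in>{E - ES k..E}. s2 x * (ES k)\<^sup>2 / 2)" if "k < d" for k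
    using interval_nonempty[OF that] bounds(1)[OF that] by (intro cINF_greatest) auto
  then have "- (2 * h\<^sup>2 / (\<eta>\<^sup>2 * real m)) \<le> gamma_min s2 E ES d"
    unfolding gamma_min_def using d_nonempty by (simp add: Min_ge_iff)
  ultimately have "exp (gamma_max s2 E ES d - gamma_min s2 E ES d)
                     \<le> exp (2 * h\<^sup>2 / (\<eta>\<^sup>2 * real m))"
    by simp
  moreover have "(\<Sum>k<d. \<bar>pvec s E ES d k - qvec (s1 E) ES d k\<bar>) / 2
                   \<le> (exp (gamma_max s2 E ES d - gamma_min s2 E ES d) - 1) / 2"
    by (rule microcanonical_gibbs_closeness[OF d_pos ES_nonneg s_deriv s1_deriv bdd, THEN conjunct2])
  ultimately show ?thesis
    by (smt (verit) divide_right_mono)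
qed

theorem mainTheorem3:
  fixes d :: nat and ES :: "nat \<Rightarrow> real" and E :: real
    and s s1 s2 :: "real \<Rightarrow> real"
  assumes d_pos: "d \<ge> 1"
    and ES_nonneg: "\<And>k. k < d \<Longrightarrow> ES k \<ge> 0"
    and s_deriv: "\<And>x. (s has_real_derivative s1 x) (at x)"
    and s1_deriv: "\<And>x. (s1 has_real_derivative s2 x) (at x)"
  shows
   "((\<forall>k<d. bdd_above ((\<lambda>\<xi>. s2 \<xi> * (ES k)\<^sup>2 / 2) ` {E - ES k..E}) \<and>
             bdd_below ((\<lambda>\<xi>. s2 \<xi> * (ES k)\<^sup>2 / 2) ` {E - ES k..E})) \<longrightarrow>
       (\<forall>k<d. \<bar>pvec s E ES d k - qvec (s1 E) ES d k\<bar>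
               \<le> qvec (s1 E) ES d k * (exp (gamma_max s2 E ES d - gamma_min s2 E ES d) - 1)) \<and>
       (\<Sum>k<d. \<bar>pvec s E ES d k - qvec (s1 E) ES d k\<bar>) / 2
         \<le> (exp (gamma_max s2 E ES d - gamma_min s2 E ES d) - 1) / 2)
    \<and>
    (\<forall>(\<eta>::real) (m::nat) (h::real). \<eta> > 0 \<and> m \<ge> 1 \<and>
       (\<forall>\<xi>\<in>{E - Max (ES ` {..<d})..E}. - 4 / (\<eta>\<^sup>2 * real m) \<le> s2 \<xi> \<and> s2 \<xi> \<le> 0) \<and>
       Max (ES ` {..<d}) \<le> h \<longrightarrow>
       (\<Sum>k<d. \<bar>pvec s E ES d k - qvec (s1 E) ES d k\<bar>) / 2
         \<le> (exp (2 * h\<^sup>2 / (\<eta>\<^sup>2 * real m)) - 1) / 2)"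
proof -
  have nonneg: "\<forall>k<d. ES k \<ge> 0"
    using ES_nonneg by blast
  note closeness = microcanonical_gibbs_closeness[where E = E, OF d_pos nonneg s_deriv s1_deriv]
  note uniform = microcanonical_gibbs_closeness_uniform[where E = E, OF d_pos nonneg s_deriv s1_deriv]
  show ?thesis
    by (rule conjI; intro allI impI) (erule closeness, (elim conjE, rule uniform; assumption))
qed

end
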